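(* Let $G\subset GL_d(\mathbb R)$ act on $\mathfrak g_{\le n}(\mathbb R^d)$, let $U\subset\mathfrak g_{\le n}(\mathbb R^d)$ be a non-empty, $G$-invariant, semialgebraic subset, and let $\varrho:U\to G$ be an almost-polynomial moving frame for the action of $G$ on $U$, with associated maps $\lambda,\kappa$. Then the non-zero components of $\mathbf c\mapsto\lambda(\mathbf c)\varrho(\mathbf c)\cdot\mathbf c$ form a fundamental set of invariants consisting only of polynomial invariants.
   Context: $\mathfrak g_{\le n}(\mathbb R^d)$ is the free step-$n$ nilpotent Lie algebra realized inside the truncated tensor algebra $T_{\le n}(\mathbb R^d)$ (spanned by words over $\{1,\dots,d\}$ of length $\le n$, concatenation product), $\mathfrak g_{\le n}=\bigoplus_{k=1}^nW_k$, $W_1=\mathrm{span}\{1,\dots,d\}$, $W_{k+1}=[W_1,W_k]$; $B=(b_{ij})\in GL_d(\mathbb R)$ acts by the algebra automorphism sending letter $i\mapsto\sum_jb_{ji}j$ (i.e. $B^{\otimes k}$ on level $k$), which preserves $\mathfrak g_{\le n}$; $\mathbb R[\mathfrak g_{\le n}(\mathbb R^d)]$ denotes polynomial functions in its coordinates. A moving frame is a smooth map $\varrho:U\to G$ with $\varrho(g\cdot\mathbf c)=\varrho(\mathbf c)g^{-1}$. It is almost-polynomial if there are maps $\lambda:U\to GL_d(\mathbb R)$ and $\kappa:\mathfrak g_{\le n}(\mathbb R^d)\to GL_d(\mathbb R)$ such that $\lambda$ is $G$-invariant, $\lambda(\mathbf c)$ is diagonal for all $\mathbf c\in U$, $\lambda_{ii}\varrho_{ij}\in\mathbb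 R[\mathfrak g_{\le n}(\mathbb R^d)]$ for all $i,j$, and $\lambda(\mathbf c)=\kappa\big(\lambda(\mathbf c)\varrho(\mathbf c)\cdot\mathbf c\big)$ for all $\mathbf c\in U$. A set of invariants $\{J_1,\dots,J_m\}$ on $U$ is fundamental if every $G$-invariant function $I$ on $U$ can be written $I(p)=I'(J_1(p),\dots,J_m(p))$ for some function $I'$. *)

theory Defs
  imports "HOL-Analysis.Analysis"
begin

text \<open>Letters are the elements of a finite type 'd (so d = CARD('d)); elements of the
truncated tensor algebra are coefficient functions on words ('d list), vanishing on words
of length > n.\<close>

definition Tsp :: "nat \<Rightarrow> ('d list \<Rightarrow> real) set" where
  "Tsp n = {x. \<forall>w. n < length w \<longrightarrow> x w = 0}"

definition trunc :: "nat \<Rightarrow> ('d list \<Rightarrow> real) \<Rightarrow> ('d list \<Rightarrow> real)" where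
  "trunc n x = (\<lambda>w. if length w \<le> n then x w else 0)"

definition letter :: "'d \<Rightarrow> ('d list \<Rightarrow> real)" where
  "letter i = (\<lambda>w. if w = [i] then 1 else 0)"

definition tmul :: "nat \<Rightarrow> ('d list \<Rightarrow> real) \<Rightarrow> ('d list \<Rightarrow> real) \<Rightarrow> ('d list \<Rightarrow> real)" where
  "tmul n x y = (\<lambda>w. if length w \<le> n then (\<Sum>k\<le>length w. x (take k w) * y (drop k w)) else 0)"

definition tbracket :: "nat \<Rightarrow> ('d list \<Rightarrow> real) \<Rightarrow> ('d list \<Rightarrow> real) \<Rightarrow> ('d list \<Rightarrow> real)" where
  "tbracket n x y = (\<lambda>w. tmul n x y w - tmul n y x w)"

text \<open>The free step-n nilpotent Lie algebra: the Lie subalgebra of T_{<=n} generated by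
the letters (= W_1 + ... + W_n).\<close>
inductive_set lie_alg :: "nat \<Rightarrow> ('d list \<Rightarrow> real) set" for n where
  zero: "(\<lambda>w. 0) \<in> lie_alg n"
| gen: "trunc n (letter i) \<in> lie_alg n"
| add: "x \<in> lie_alg n \<Longrightarrow> y \<in> lie_alg n \<Longrightarrow> (\<lambda>w. x w + y w) \<in> lie_alg n"
| scale: "x \<in> lie_alg n \<Longrightarrow> (\<lambda>w. c * x w) \<in> lie_alg n"
| bracket: "x \<in> lie_alg n \<Longrightarrow> y \<in> lie_alg n \<Longrightarrow> tbracket n x y \<in> lie_alg n"

text \<open>Action of a matrix B: letter i goes to sum_j b_ji j, i.e. B^{\<otimes>k} on level k.\<close>
definition act :: "real^'d^'d \<Rightarrow> ('d::finite list \<Rightarrow> real) \<Rightarrow> ('d list \<Rightarrow> real)" where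
  "act B x = (\<lambda>w. \<Sum>u\<in>{u. length u = length w}.
                   (\<Prod>m<length w. B $ (w ! m) $ (u ! m)) * x u)"

definition matgroup :: "(real^'d^'d) set \<Rightarrow> bool" where
  "matgroup G \<longleftrightarrow> G \<subseteq> {A. invertible A} \<and> mat 1 \<in> G \<and>
     (\<forall>A\<in>G. \<forall>B\<in>G. A ** B \<in> G) \<and> (\<forall>A\<in>G. matrix_inv A \<in> G)"

inductive_set poly_fun :: "(('d list \<Rightarrow> real) \<Rightarrow> real) set" where
  const: "(\<lambda>x. c) \<in> poly_fun"
| coord: "(\<lambda>x. x w) \<in> poly_fun"
| add: "p \<in> poly_fun \<Longrightarrow> q \<in> poly_fun \<Longrightarrow> (\<lambda>x. p x + q x) \<in> poly_fun"
| mult: "p \<in> poly_fun \<Longrightarrow> q \<in> poly_fun \<Longrightarrow> (\<lambda>x. p x * q x) \<in> poly_fun"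

definition polynomial_on :: "('d list \<Rightarrow> real) set \<Rightarrow> (('d list \<Rightarrow> real) \<Rightarrow> real) \<Rightarrow> bool" where
  "polynomial_on U f \<longleftrightarrow> (\<exists>p\<in>poly_fun. \<forall>c\<in>U. f c = p c)"

inductive_set semialg :: "nat \<Rightarrow> ('d list \<Rightarrow> real) set set" for n where
  basic: "p \<in> poly_fun \<Longrightarrow> {x \<in> Tsp n. p x > 0} \<in> semialg n"
| compl: "S \<in> semialg n \<Longrightarrow> Tsp n - S \<in> semialg n"
| union: "S \<in> semialg n \<Longrightarrow> S' \<in> semialg n \<Longrightarrow> S \<union> S' \<in> semialg n"

text \<open>Smoothness (C^\<infinity>) via iterated partial derivatives in the word coordinates,
on an open set (product topology) intersected with T_{<=n}.\<close>
definition unitv :: "'d list \<Rightarrow> ('d list \<Rightarrow> real)" where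
  "unitv w = (\<lambda>v. if v = w then 1 else 0)"

definition pdiff :: "'d list \<Rightarrow> (('d list \<Rightarrow> real) \<Rightarrow> real) \<Rightarrow> (('d list \<Rightarrow> real) \<Rightarrow> real)" where
  "pdiff w F = (\<lambda>x. deriv (\<lambda>t. F (\<lambda>v. x v + t * unitv w v)) 0)"

fun ipd :: "'d list list \<Rightarrow> (('d list \<Rightarrow> real) \<Rightarrow> real) \<Rightarrow> (('d list \<Rightarrow> real) \<Rightarrow> real)" where
  "ipd [] F = F"
| "ipd (w # ws) F = pdiff w (ipd ws F)"

definition Cinf_on :: "nat \<Rightarrow> ('d list \<Rightarrow> real) set \<Rightarrow> (('d list \<Rightarrow> real) \<Rightarrow> real) \<Rightarrow> bool" where
  "Cinf_on n V F \<longleftrightarrow> (\<forall>ws. (\<forall>w\<in>set ws. length w \<le> n) \<longrightarrow>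
      continuous_on (V \<inter> Tsp n) (ipd ws F) \<and>
      (\<forall>w x. length w \<le> n \<longrightarrow> x \<in> V \<inter> Tsp n \<longrightarrow>
          (\<lambda>t. ipd ws F (\<lambda>v. x v + t * unitv w v)) differentiable (at 0)))"

definition smooth_map_on :: "nat \<Rightarrow> ('d list \<Rightarrow> real) set \<Rightarrow> (('d list \<Rightarrow> real) \<Rightarrow> real^'d^'d) \<Rightarrow> bool" where
  "smooth_map_on n U f \<longleftrightarrow> (\<exists>V F. open V \<and> U \<subseteq> V \<and> (\<forall>c\<in>U. F c = f c) \<and>
      (\<forall>i j. Cinf_on n V (\<lambda>x. F x $ i $ j)))"

definition G_invariant_set :: "(real^'d^'d) set \<Rightarrow> ('d::finite list \<Rightarrow> real) set \<Rightarrow> bool" where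
  "G_invariant_set G U \<longleftrightarrow> (\<forall>g\<in>G. \<forall>c\<in>U. act g c \<in> U)"

definition invariant_fun :: "(real^'d^'d) set \<Rightarrow> ('d::finite list \<Rightarrow> real) set \<Rightarrow> (('d list \<Rightarrow> real) \<Rightarrow> 'b) \<Rightarrow> bool" where
  "invariant_fun G U f \<longleftrightarrow> (\<forall>g\<in>G. \<forall>c\<in>U. f (act g c) = f c)"

definition moving_frame :: "(real^'d^'d) set \<Rightarrow> nat \<Rightarrow> ('d::finite list \<Rightarrow> real) set \<Rightarrow> (('d list \<Rightarrow> real) \<Rightarrow> real^'d^'d) \<Rightarrow> bool" where
  "moving_frame G n U rho \<longleftrightarrow> (\<forall>c\<in>U. rho c \<in> G) \<and> smooth_map_on n U rho \<and>
     (\<forall>g\<in>G. \<forall>c\<in>U. rho (act g c) = rho c ** matrix_inv g)"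

definition almost_polynomial_wrt :: "(real^'d^'d) set \<Rightarrow> nat \<Rightarrow> ('d::finite list \<Rightarrow> real) set \<Rightarrow>
    (('d list \<Rightarrow> real) \<Rightarrow> real^'d^'d) \<Rightarrow> (('d list \<Rightarrow> real) \<Rightarrow> real^'d^'d) \<Rightarrow>
    (('d list \<Rightarrow> real) \<Rightarrow> real^'d^'d) \<Rightarrow> bool" where
  "almost_polynomial_wrt G n U rho lam kappa \<longleftrightarrow>
     moving_frame G n U rho \<and>
     (\<forall>c\<in>U. invertible (lam c)) \<and> (\<forall>x\<in>lie_alg n. invertible (kappa x)) \<and>
     invariant_fun G U lam \<and>
     (\<forall>c\<in>U. \<forall>i j. i \<noteq> j \<longrightarrow> lam c $ i $ j = 0) \<and>
     (\<forall>i j. polynomial_on U (\<lambda>c. lam c $ i $ i * rho c $ i $ j)) \<and>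
     (\<forall>c\<in>U. lam c = kappa (act (lam c ** rho c) c))"

definition fundamental_set :: "(real^'d^'d) set \<Rightarrow> ('d::finite list \<Rightarrow> real) set \<Rightarrow>
    ('i \<Rightarrow> ('d list \<Rightarrow> real) \<Rightarrow> real) \<Rightarrow> 'i set \<Rightarrow> bool" where
  "fundamental_set G U J A \<longleftrightarrow> (\<forall>a\<in>A. invariant_fun G U (J a)) \<and>
     (\<forall>I :: ('d list \<Rightarrow> real) \<Rightarrow> real. invariant_fun G U I \<longrightarrow>
        (\<exists>I'. \<forall>c\<in>U. I c = I' (\<lambda>a. if a \<in> A then J a c else 0)))"

end

theory Submission
  imports Defs
begin

text \<open>The normal form N c = \<lambda>(c) \<rho>(c) \<cdot> c is invariant, since \<lambda> is invariant and \<rho> is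
equivariant. Conversely, the orbit of c can be read off from N c: the identity
\<lambda>(c) = \<kappa>(N c) gives \<rho>(c) \<cdot> c = \<kappa>(N c)\<inverse> \<cdot> N c, so every invariant I satisfies
I c = I (\<kappa>(N c)\<inverse> \<cdot> N c). Since \<lambda>(c) is diagonal, the entries of \<lambda>(c) \<rho>(c) are the
polynomials \<lambda>(c)_ii \<rho>(c)_ij, and the action is polynomial in the matrix entries and the
coordinates, so the components of N are polynomial.\<close>

lemma matrix_inv_left:
  fixes A :: "'a::semiring_1^'n^'m"
  assumes "invertible A"
  shows "matrix_inv A ** A = mat 1"
proof -
  have "\<exists>A'. A ** A' = mat 1 \<and> A' ** A = mat 1"
    using assms by (auto simp: invertible_def)
  then have "A ** matrix_inv A = mat 1 \<and> matrix_inv A ** A = mat 1"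
    unfolding matrix_inv_def by (rule someI_ex)
  then show ?thesis by simp
qed

lemma diag_matrix_mult_entry:
  fixes D M :: "'a::semiring_1^'n^'n"
  assumes "\<And>i j. i \<noteq> j \<Longrightarrow> D $ i $ j = 0"
  shows "(D ** M) $ i $ j = D $ i $ i * M $ i $ j"
proof -
  have "(D ** M) $ i $ j = (\<Sum>k\<in>UNIV. if k = i then D $ i $ k * M $ k $ j else 0)"
    unfolding matrix_matrix_mult_def vec_lambda_beta by (rule sum.cong) (auto simp: assms)
  then show ?thesis by simp
qed

lemma finite_lists_length: "finite {u::'a::finite list. length u = k}"
  using finite_lists_length_eq[of "UNIV::'a set" k] by simp

lemma sum_lists_length_Suc:
  fixes g :: "'a::finite list \<Rightarrow> 'b::comm_monoid_add"
  shows "(\<Sum>u | length u = Suc k. g u) = (\<Sum>a\<in>UNIV. \<Sum>u | length u = k. g (a # u))"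
proof -
  have "{u::'a list. length u = Suc k} = (\<lambda>(a, u). a # u) ` (UNIV \<times> {u. length u = k})"
    by (auto simp: length_Suc_conv image_iff)
  moreover have "inj_on (\<lambda>(a, u). a # u) (UNIV \<times> {u::'a list. length u = k})"
    by (auto simp: inj_on_def)
  ultimately have "(\<Sum>u | length u = Suc k. g u) = (\<Sum>(a, u)\<in>UNIV \<times> {u. length u = k}. g (a # u))"
    by (simp add: sum.reindex case_prod_unfold)
  then show ?thesis
    by (simp add: sum.cartesian_product)
qed

lemma sum_lists_length_prod:
  fixes F :: "nat \<Rightarrow> 'a::finite \<Rightarrow> 'b::comm_semiring_1"
  shows "(\<Sum>u | length u = k. \<Prod>m<k. F m (u ! m)) = (\<Prod>m<k. \<Sum>j\<in>UNIV. F m j)"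
proof (induction k arbitrary: F)
  case 0
  then show ?case by simp
next
  case (Suc k)
  have "(\<Sum>u | length u = Suc k. \<Prod>m<Suc k. F m (u ! m))
      = (\<Sum>a\<in>UNIV. \<Sum>u | length u = k. F 0 a * (\<Prod>m<k. F (Suc m) (u ! m)))"
    unfolding sum_lists_length_Suc prod.lessThan_Suc_shift by simp
  also have "\<dots> = (\<Sum>a\<in>UNIV. F 0 a * (\<Prod>m<k. \<Sum>j\<in>UNIV. F (Suc m) j))"
    by (simp add: sum_distrib_left[symmetric] Suc.IH[of "\<lambda>m. F (Suc m)"])
  also have "\<dots> = (\<Prod>m<Suc k. \<Sum>j\<in>UNIV. F m j)"
    unfolding prod.lessThan_Suc_shift by (simp add: sum_distrib_right)
  finally show ?case .
qed

lemma act_act: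
  fixes A B :: "real^'d::finite^'d"
  shows "act A (act B x) = act (A ** B) x"
proof
  fix w :: "'d list"
  define L where "L = {u::'d list. length u = length w}"
  have "act A (act B x) w = (\<Sum>u\<in>L. (\<Prod>m<length w. A $ (w!m) $ (u!m)) *
          (\<Sum>v\<in>L. (\<Prod>m<length w. B $ (u!m) $ (v!m)) * x v))"
    unfolding act_def L_def by (intro sum.cong) auto
  also have "\<dots> = (\<Sum>v\<in>L. \<Sum>u\<in>L. (\<Prod>m<length w. A $ (w!m) $ (u!m) * B $ (u!m) $ (v!m)) * x v)"
    by (subst sum.swap) (simp add: sum_distrib_left prod.distrib mult.assoc)
  also have "\<dots> = (\<Sum>v\<in>L. (\<Sum>u\<in>L. \<Prod>m<length w. A $ (w!m) $ (u!m) * B $ (u!m) $ (v!m)) * x v)"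
    by (simp add: sum_distrib_right)
  also have "\<dots> = act (A ** B) x w"
    unfolding act_def L_def by (subst sum_lists_length_prod) (simp add: matrix_matrix_mult_def)
  finally show "act A (act B x) w = act (A ** B) x w" .
qed

lemma act_Tsp: "x \<in> Tsp n \<Longrightarrow> act B x \<in> Tsp n"
  by (simp add: Tsp_def act_def)

lemma lie_alg_subset_Tsp: "lie_alg n \<subseteq> Tsp n"
proof
  fix x assume "x \<in> lie_alg n"
  then show "x \<in> Tsp n"
    by (induction rule: lie_alg.induct) (auto simp: Tsp_def trunc_def tbracket_def tmul_def)
qed

lemma polynomial_on_cong:
  "polynomial_on U f \<Longrightarrow> (\<And>c. c \<in> U \<Longrightarrow> f c = g c) \<Longrightarrow> polynomial_on U g"
  unfolding polynomial_on_def by metis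

lemma polynomial_on_const: "polynomial_on U (\<lambda>c. k)"
  unfolding polynomial_on_def by (rule bexI[OF _ poly_fun.const[of k]]) simp

lemma polynomial_on_coord: "polynomial_on U (\<lambda>c. c w)"
  unfolding polynomial_on_def by (rule bexI[OF _ poly_fun.coord[of w]]) simp

lemma polynomial_on_add:
  "polynomial_on U f \<Longrightarrow> polynomial_on U g \<Longrightarrow> polynomial_on U (\<lambda>c. f c + g c)"
  unfolding polynomial_on_def by (metis (no_types, lifting) poly_fun.add)

lemma polynomial_on_mult:
  "polynomial_on U f \<Longrightarrow> polynomial_on U g \<Longrightarrow> polynomial_on U (\<lambda>c. f c * g c)"
  unfolding polynomial_on_def by (metis (no_types, lifting) poly_fun.mult)

lemma polynomial_on_sum:
  "finite S \<Longrightarrow> (\<And>s. s \<in> S \<Longrightarrow> polynomial_on U (f s)) \<Longrightarrow>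
    polynomial_on U (\<lambda>c. \<Sum>s\<in>S. f s c)"
  by (induction S rule: finite_induct) (auto intro: polynomial_on_const polynomial_on_add)

lemma polynomial_on_prod:
  "finite S \<Longrightarrow> (\<And>s. s \<in> S \<Longrightarrow> polynomial_on U (f s)) \<Longrightarrow>
    polynomial_on U (\<lambda>c. \<Prod>s\<in>S. f s c)"
  by (induction S rule: finite_induct) (auto intro: polynomial_on_const polynomial_on_mult)

lemma polynomial_on_act:
  assumes "\<And>i j. polynomial_on U (\<lambda>c. M c $ i $ j)"
  shows "polynomial_on U (\<lambda>c. act (M c) c w)"
  unfolding act_def
  by (intro polynomial_on_sum polynomial_on_mult polynomial_on_prod polynomial_on_coord assms
      finite_lists_length finite_lessThan)

lemma fundamental_setI:
  fixes G :: "(real^'d::finite^'d) set" and J :: "'i \<Rightarrow> ('d list \<Rightarrow> real) \<Rightarrow> real"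
  assumes "\<And>a. a \<in> A \<Longrightarrow> invariant_fun G U (J a)"
    and "\<And>c. c \<in> U \<Longrightarrow> \<exists>g\<in>G. act g c = \<Phi> (\<lambda>a. if a \<in> A then J a c else 0)"
  shows "fundamental_set G U J A"
  unfolding fundamental_set_def
proof (intro conjI ballI allI impI)
  fix I :: "('d list \<Rightarrow> real) \<Rightarrow> real"
  assume "invariant_fun G U I"
  then have "I c = I (\<Phi> (\<lambda>a. if a \<in> A then J a c else 0))" if "c \<in> U" for c
    using assms(2)[OF that] that unfolding invariant_fun_def by metis
  then show "\<exists>I'. \<forall>c\<in>U. I c = I' (\<lambda>a. if a \<in> A then J a c else 0)"
    by (intro exI[of _ "I \<circ> \<Phi>"]) simp
qed (use assms(1) in blast)

lemma moving_frame_normal_form_invariant: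
  assumes "matgroup G" "moving_frame G n U rho" "invariant_fun G U lam"
  shows "invariant_fun G U (\<lambda>c. act (lam c ** rho c) c)"
  unfolding invariant_fun_def
proof (intro ballI)
  fix g c assume g: "g \<in> G" and c: "c \<in> U"
  have "invertible g"
    using assms(1) g unfolding matgroup_def by blast
  have "act (lam (act g c) ** rho (act g c)) (act g c)
      = act (lam c ** (rho c ** matrix_inv g) ** g) c"
    using assms(2,3) g c unfolding moving_frame_def invariant_fun_def by (simp add: act_act)
  also have "\<dots> = act (lam c ** rho c) c"
    by (simp add: matrix_mul_assoc[symmetric] matrix_inv_left[OF \<open>invertible g\<close>])
  finally show "act (lam (act g c) ** rho (act g c)) (act g c) = act (lam c ** rho c) c" .
qed

lemma almost_polynomial_frame_recovery:
  assumes "almost_polynomial_wrt G n U rho lam kappa" and "c \<in> U"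
  defines "N \<equiv> act (lam c ** rho c) c"
  shows "act (rho c) c = act (matrix_inv (kappa N)) N"
proof -
  have "kappa N = lam c" and "invertible (lam c)"
    using assms unfolding almost_polynomial_wrt_def by simp_all
  then show ?thesis
    unfolding N_def act_act by (simp add: matrix_mul_assoc matrix_inv_left)
qed

lemma almost_polynomial_normal_form_polynomial:
  assumes "almost_polynomial_wrt G n U rho lam kappa"
  shows "polynomial_on U (\<lambda>c. act (lam c ** rho c) c w)"
proof (rule polynomial_on_act)
  fix i j
  have diag: "\<And>c i j. c \<in> U \<Longrightarrow> i \<noteq> j \<Longrightarrow> lam c $ i $ j = 0"
    and entries: "polynomial_on U (\<lambda>c. lam c $ i $ i * rho c $ i $ j)"
    using assms unfolding almost_polynomial_wrt_def by blast+
  show "polynomial_on U (\<lambda>c. (lam c ** rho c) $ i $ j)"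
    by (rule polynomial_on_cong[OF entries]) (simp add: diag_matrix_mult_entry diag)
qed

theorem proposition4p10:
  fixes G :: "(real^'d::finite^'d) set" and n :: nat and U :: "('d list \<Rightarrow> real) set"
    and rho lam kappa :: "('d list \<Rightarrow> real) \<Rightarrow> real^'d^'d"
  assumes "matgroup G"
    and "U \<noteq> {}" and "U \<subseteq> lie_alg n" and "G_invariant_set G U" and "U \<in> semialg n"
    and "almost_polynomial_wrt G n U rho lam kappa"
  shows "fundamental_set G U (\<lambda>w c. act (lam c ** rho c) c w)
           {w. length w \<le> n \<and> (\<exists>c\<in>U. act (lam c ** rho c) c w \<noteq> 0)}
       \<and> (\<forall>w\<in>{w. length w \<le> n \<and> (\<exists>c\<in>U. act (lam c ** rho c) c w \<noteq> 0)}.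
              polynomial_on U (\<lambda>c. act (lam c ** rho c) c w))"
proof -
  define N where "N c = act (lam c ** rho c) c" for c
  define A where "A = {w. length w \<le> n \<and> (\<exists>c\<in>U. N c w \<noteq> 0)}"
  have frame: "moving_frame G n U rho" "invariant_fun G U lam"
    using assms(6) unfolding almost_polynomial_wrt_def by simp_all
  have "invariant_fun G U (\<lambda>c. N c w)" for w
    using moving_frame_normal_form_invariant[OF assms(1) frame]
    unfolding N_def invariant_fun_def by simp
  moreover have "\<exists>g\<in>G. act g c = act (matrix_inv (kappa y)) y"
    if "c \<in> U" and "y = (\<lambda>a. if a \<in> A then N c a else 0)" for c y
  proof
    have "N c \<in> Tsp n"
      using that(1) assms(3) lie_alg_subset_Tsp act_Tsp unfolding N_def by blast
    \<comment> \<open>the components outside A vanish, by truncation or by the definition of A\<close>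
    then have "y = N c"
      using that unfolding A_def Tsp_def by fastforce
    then show "act (rho c) c = act (matrix_inv (kappa y)) y"
      using almost_polynomial_frame_recovery[OF assms(6) that(1)] unfolding N_def by simp
    show "rho c \<in> G"
      using frame(1) that(1) unfolding moving_frame_def by blast
  qed
  ultimately have "fundamental_set G U (\<lambda>w c. N c w) A"
    by (rule fundamental_setI[where \<Phi> = "\<lambda>y. act (matrix_inv (kappa y)) y"]) simp_all
  then show ?thesis
    using almost_polynomial_normal_form_polynomial[OF assms(6)] unfolding N_def A_def by simp
qed

end
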